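(* Let $p_0<p_g<1-S$ and set $\hat\theta_g:=(p_g+S)\wedge1$. Suppose there exist $\mu_g\in(0,1)$, $\bar\theta_g,\bar\theta_m$ and $\hat\theta\in(0,\hat\theta_g)$ with $\bar\theta_g<\bar\theta_m<p_g$ satisfying: (a) $p_g+\bar\theta_g=2\bar\theta_m$; (b) $2\bar\theta_m+2S=\hat\theta+p_g+S$; (c) $\bar\theta_g\ge I$; (d) $\mu_g\bar\theta_g+(1-\mu_g)\bar\theta_m=\mathbb{E}[\theta\mid\theta\le\hat\theta]$; (e) $\bar\theta_g\ge\mathbb{E}[\theta\mid\theta\le F^{-1}(\mu_gF(\hat\theta))]$; (f) for all $p'\in(\bar\theta_g,p_g]$: $\dfrac{\mu_gF(\hat\theta)\bar\theta_g+\int_{\hat\theta}^{p'+S}\theta f(\theta)d\theta}{\mu_gF(\hat\theta)+F(p'+S)-F(\hat\theta)}-p'<0$; (g) for all $p'\in(p_g,1-S]$: $\dfrac{(1-\mu_g)F(\hat\theta)\bar\theta_m+\int_{\hat\theta_g}^{p'+S}\theta f(\theta)d\theta}{(1-\mu_g)F(\hat\theta)+F(p'+S)-F(\hat\theta_g)}-p'<0$. Then there exists a short-lived stimulation equilibrium of the two-period model with a transparent bailout at $p_g$, in which types $\theta\le\hat\theta$ sell in both periods (a fraction $\mu_g$ of them, with average value $\bar\theta_g$, to the government at $t=1$ and then at price $\bar\theta_g$ at $t=2$; the rest, with average value $\bar\theta_m$, to the market at price $\bar\theta_m$ in both periods), types in $(\hat\theta,\hat\theta_g]$ sell only to the government at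 $t=1$, and types above $\hat\theta_g$ never sell.
   Context: Two-period model: a continuum of firms with privately known type $\theta\in[0,1]$, cdf $F$, density $f>0$, $f$ strictly log-concave, and for every $b\in(0,1]$ the map $a\mapsto 2\mathbb{E}[\theta\mid a<\theta<b]-\mathbb{E}[\theta\mid\theta\le a]$ is increasing on $(0,b)$. A type-$\theta$ firm holds one unit of an asset worth $\theta$ in each of two periods $t=1,2$. In each period it has a project with cost $I>0$ and net return $S>0$ that can be funded only by selling that period's unit; selling at price $p\ge I$ yields $p+S$ for that period, not selling yields $\theta$. Firms' total payoff is the sum over periods (equilibria in the limit of period-2 weight $\delta\to1$). In each period competitive short-lived risk-neutral buyers make Bertrand price offers, breaking even in expectation (indifferent buyers buy). At $t=1$ only, the government offers to buy one unit at price $p_g$; firms sell their $t=1$ unit to the government, to the market, or not at all. $t=1$ market sales are unobserved at $t=2$; acceptance of the government offer is observed at $t=2$ (transparent bailout), so $t=2$ buyers can make separate offers to recipients and non-recipients. Equilibrium means perfect Bayesian equilibrium. Laissez-faire: $\theta_0\in(0,1)$ uniquely solves $\theta_0-S=\mathbb{E}[\theta\mid\theta\le\theta_0]$, $p_0:=\mathbb{E}[\theta\mid\theta\le\theta_0]\ge I$. Every equilibrium has cutoffs $0<\hat\theta\le\hat\theta_g\le\theta_2$: types $\le\hat\theta$ sell in both periods, types in $(\hat\theta,\hat\theta_g]$ sell only at $t=1$ to the government, types in $(\hat\theta_g,\theta_2]$ sell only at $t=2$, higher types never sell. A short-lived stimulation equilibrium is one with $\hat\theta_g=\theta_2$. 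*)

theory Defs
  imports "HOL-Analysis.Analysis"
begin

datatype act = Gov | Mkt | NoSale

definition Fc :: "(real \<Rightarrow> real) \<Rightarrow> real \<Rightarrow> real" where
  "Fc f x = integral ({0..1} \<inter> {..x}) f"

definition cexp_le :: "(real \<Rightarrow> real) \<Rightarrow> real \<Rightarrow> real" where
  "cexp_le f a = integral ({0..1} \<inter> {..a}) (\<lambda>t. t * f t) / Fc f a"

definition cexp_between :: "(real \<Rightarrow> real) \<Rightarrow> real \<Rightarrow> real \<Rightarrow> real" where
  "cexp_between f a b =
     integral ({0..1} \<inter> {a<..<b}) (\<lambda>t. t * f t) / (Fc f b - Fc f a)"

definition Finv :: "(real \<Rightarrow> real) \<Rightarrow> real \<Rightarrow> real" where
  "Finv f y = (THE x. x \<in> {0..1} \<and> Fc f x = y)"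

definition strictly_concave_on :: "real set \<Rightarrow> (real \<Rightarrow> real) \<Rightarrow> bool" where
  "strictly_concave_on A g \<longleftrightarrow>
     (\<forall>x\<in>A. \<forall>y\<in>A. \<forall>u::real. x \<noteq> y \<and> 0 < u \<and> u < 1 \<longrightarrow>
        g ((1 - u) * x + u * y) > (1 - u) * g x + u * g y)"

definition type_density :: "(real \<Rightarrow> real) \<Rightarrow> bool" where
  "type_density f \<longleftrightarrow>
     (\<forall>t\<in>{0..1}. f t > 0) \<and> f integrable_on {0..1} \<and> integral {0..1} f = 1 \<and>
     strictly_concave_on {0..1} (\<lambda>t. ln (f t)) \<and>
     (\<forall>b\<in>{0<..1}. strict_mono_on {0<..<b}
         (\<lambda>a. 2 * cexp_between f a b - cexp_le f a))"

text \<open>Payoff in one period from selling the unit at price p (the project, with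
  cost I and net return S, is funded only if p \<ge> I).\<close>
definition sale_pay :: "real \<Rightarrow> real \<Rightarrow> real \<Rightarrow> real" where
  "sale_pay I S p = (if p \<ge> I then p + S else p)"

text \<open>Total payoff (periods 1 and 2, undiscounted) of a type-t firm choosing t=1
  action a when the t=1 market price is p, the government price is pg, and the
  t=2 prices are p2g (recipients) and p2n (non-recipients); at t=2 the firm
  behaves optimally.\<close>
definition pay1 :: "real \<Rightarrow> real \<Rightarrow> real \<Rightarrow> real \<Rightarrow> real \<Rightarrow> real \<Rightarrow> real \<Rightarrow> act \<Rightarrow> real" where
  "pay1 I S pg p2g p2n t p a = (case a of
      Gov \<Rightarrow> sale_pay I S pg + max (sale_pay I S p2g) t
    | Mkt \<Rightarrow> sale_pay I S p + max (sale_pay I S p2n) t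
    | NoSale \<Rightarrow> t + max (sale_pay I S p2n) t)"

text \<open>Competitive (Bertrand, break-even) pricing in one market segment:
  w q t is the density of sellers of type t when the best offer is q.\<close>
definition competitive_price :: "(real \<Rightarrow> real \<Rightarrow> real) \<Rightarrow> real \<Rightarrow> bool" where
  "competitive_price w p \<longleftrightarrow>
     (integral {0..1} (w p) > 0 \<longrightarrow>
        integral {0..1} (\<lambda>t. t * w p t) = p * integral {0..1} (w p)) \<and>
     (\<forall>q>p. integral {0..1} (\<lambda>t. t * w q t) - q * integral {0..1} (w q) \<le> 0)"

text \<open>Perfect Bayesian equilibrium with a transparent bailout at price pg.
  s1 t p a : probability that type t takes t=1 action a when the best t=1 market
     offer is p;
  s2 t h q : probability that type t with t=1 action h sells at t=2 when its best
     t=2 offer is q;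
  p1 : t=1 market price; p2g / p2n : t=2 prices to recipients / non-recipients
  (acceptance of the government offer is observed at t=2, t=1 market sales are not).\<close>
definition transparent_equilibrium ::
  "(real \<Rightarrow> real) \<Rightarrow> real \<Rightarrow> real \<Rightarrow> real \<Rightarrow>
   (real \<Rightarrow> real \<Rightarrow> act \<Rightarrow> real) \<Rightarrow> (real \<Rightarrow> act \<Rightarrow> real \<Rightarrow> real) \<Rightarrow>
   real \<Rightarrow> real \<Rightarrow> real \<Rightarrow> bool" where
  "transparent_equilibrium f I S pg s1 s2 p1 p2g p2n \<longleftrightarrow>
     (\<forall>t p a. 0 \<le> s1 t p a) \<and>
     (\<forall>t p. s1 t p Gov + s1 t p Mkt + s1 t p NoSale = 1) \<and>
     (\<forall>t h q. 0 \<le> s2 t h q \<and> s2 t h q \<le> 1) \<and>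
     (\<forall>p a. (\<lambda>t. s1 t p a) \<in> borel_measurable borel) \<and>
     (\<forall>h q. (\<lambda>t. s2 t h q) \<in> borel_measurable borel) \<and>
     \<comment> \<open>sequential rationality of firms at t=2, for every offered price\<close>
     (\<forall>t\<in>{0..1}. \<forall>h q. (sale_pay I S q > t \<longrightarrow> s2 t h q = 1) \<and>
                       (sale_pay I S q < t \<longrightarrow> s2 t h q = 0)) \<and>
     \<comment> \<open>optimality of firms at t=1, for every offered market price\<close>
     (\<forall>t\<in>{0..1}. \<forall>p a. s1 t p a > 0 \<longrightarrow>
        (\<forall>b. pay1 I S pg p2g p2n t p b \<le> pay1 I S pg p2g p2n t p a)) \<and>
     \<comment> \<open>competitive buyers at t=1\<close>
     competitive_price (\<lambda>q t. f t * s1 t q Mkt) p1 \<and>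
     \<comment> \<open>competitive buyers at t=2, recipients\<close>
     competitive_price (\<lambda>q t. f t * s1 t p1 Gov * s2 t Gov q) p2g \<and>
     \<comment> \<open>competitive buyers at t=2, non-recipients\<close>
     competitive_price
       (\<lambda>q t. f t * (s1 t p1 Mkt * s2 t Mkt q + s1 t p1 NoSale * s2 t NoSale q)) p2n"

end

theory Submission
  imports Defs
begin

text \<open>Types up to \<open>\<theta>h\<close> are indifferent between the
  bailout followed by a sale at \<open>\<theta>bg\<close> and two market sales at \<open>\<theta>bm\<close>, by (a) and (b); they are
  split between the two so that the government pool has mean \<open>\<theta>bg\<close> and the market pool mean
  \<open>\<theta>bm\<close>, which (d) and (e) make possible, so all on-path prices break even. Conditions (f) and (g)
  rule out profitable deviations at \<open>t = 2\<close>. A higher \<open>t = 1\<close> market offer \<open>q\<close> attracts the types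
  below a cutoff; since log-concavity makes the truncated mean \<open>E[\<theta> | \<theta> \<le> x]\<close> grow with slope at
  most one, the buyer's revenue is bounded by \<open>q\<close>, starting from \<open>\<theta>h\<close> when \<open>q \<le> pg\<close> and from
  the laissez-faire fixed point \<open>\<theta>0\<close> otherwise.\<close>

section \<open>Log-concave type densities\<close>

lemma concave_on_increment_antimono:
  fixes g :: "real \<Rightarrow> real"
  assumes g: "concave_on {a..b} g" and "a \<le> r" "r \<le> s" "0 \<le> d" "s + d \<le> b"
  shows "g (s + d) + g r \<le> g (r + d) + g s"
proof (cases "d = 0 \<or> r = s")
  case True
  then show ?thesis by auto
next
  case False
  define L where "L = s + d - r"
  have L: "0 < L" using False assms by (auto simp: L_def)
  define u where "u = (s - r) / L"
  have u: "0 \<le> u" "u \<le> 1" using L assms by (auto simp: u_def L_def field_simps)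
  have uL: "u * L = s - r" using L by (simp add: u_def)
  have "(1 - u) * r + u * (s + d) = r + u * L" by (simp add: L_def algebra_simps)
  then have s_eq: "(1 - u) * r + u * (s + d) = s" using uL by simp
  have "(1 - (1 - u)) * r + (1 - u) * (s + d) = s + d - u * L" by (simp add: L_def algebra_simps)
  then have rd_eq: "(1 - (1 - u)) * r + (1 - u) * (s + d) = r + d" using uL by simp
  have in_ab: "r \<in> {a..b}" "s + d \<in> {a..b}" using assms by auto
  have "(1 - u) * g r + u * g (s + d) \<le> g s"
    using concave_onD[OF g, of u r "s + d"] u in_ab s_eq by simp
  moreover have "(1 - (1 - u)) * g r + (1 - u) * g (s + d) \<le> g (r + d)"
    using concave_onD[OF g, of "1 - u" r "s + d"] u in_ab rd_eq by simp
  ultimately show ?thesis by (simp add: algebra_simps)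
qed

lemma type_density_pos: "type_density f \<Longrightarrow> t \<in> {0..1} \<Longrightarrow> 0 < f t"
  unfolding type_density_def by auto

lemma type_density_integrable:
  "type_density f \<Longrightarrow> 0 \<le> a \<Longrightarrow> b \<le> 1 \<Longrightarrow> f integrable_on {a..b}"
  unfolding type_density_def by (cases "a \<le> b") (auto intro: integrable_subinterval_real)

lemma type_density_integrable_mult_id:
  assumes td: "type_density f" and "0 \<le> a" "b \<le> 1"
  shows "(\<lambda>t. t * f t) integrable_on {a..b}"
proof -
  have Icc_sets: "{0..1::real} \<in> sets lebesgue" by simp
  have "f absolutely_integrable_on {0..1}"
    using type_density_integrable[OF td, of 0 1] type_density_pos[OF td]
    by (intro nonnegative_absolutely_integrable_1) (auto intro: less_imp_le)
  then have "(\<lambda>t. t * f t) absolutely_integrable_on {0..1}"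
    by (intro absolutely_integrable_bounded_measurable_product_real Icc_sets
        continuous_imp_measurable_on_sets_lebesgue[OF continuous_on_id]) auto
  then have "(\<lambda>t. t * f t) integrable_on {0..1}"
    by (rule set_lebesgue_integral_eq_integral(1))
  then show ?thesis using assms by (auto intro: integrable_subinterval_real)
qed

lemma type_density_ln_concave:
  assumes "type_density f"
  shows "concave_on {0..1} (\<lambda>t. ln (f t))"
proof (rule concave_on_linorderI)
  fix u x y :: real
  assume "0 < u" "u < 1" "x \<in> {0..1}" "y \<in> {0..1}" "x < y"
  moreover have "strictly_concave_on {0..1} (\<lambda>t. ln (f t))"
    using assms unfolding type_density_def by blast
  ultimately show "(1 - u) * ln (f x) + u * ln (f y) \<le> ln (f ((1 - u) *\<^sub>R x + u *\<^sub>R y))"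
    unfolding strictly_concave_on_def by (auto intro: less_imp_le)
qed simp

lemma type_density_ge_min:
  assumes td: "type_density f" and "0 \<le> a" "a \<le> t" "t \<le> b" "b \<le> 1"
  shows "min (f a) (f b) \<le> f t"
proof -
  have "concave_on {a..b} (\<lambda>t. ln (f t))"
    unfolding concave_on_def
    by (rule convex_on_subset[OF type_density_ln_concave[OF td, unfolded concave_on_def]])
      (use assms in auto)
  then have "min (ln (f a)) (ln (f b)) \<le> ln (f t)"
    using assms by (intro concave_on_ge_min) auto
  then have "ln (f a) \<le> ln (f t) \<or> ln (f b) \<le> ln (f t)"
    by (simp add: min_le_iff_disj)
  moreover have "0 < f a" "0 < f b" "0 < f t" using type_density_pos[OF td] assms by auto
  ultimately show ?thesis by (auto simp: min_le_iff_disj)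
qed

lemma type_density_ratio_mono:
  assumes td: "type_density f" and "0 \<le> r" "r \<le> s" "0 \<le> d" "s + d \<le> 1"
  shows "f (s + d) * f r \<le> f (r + d) * f s"
proof -
  have "ln (f (s + d)) + ln (f r) \<le> ln (f (r + d)) + ln (f s)"
    using assms by (intro concave_on_increment_antimono[OF type_density_ln_concave[OF td]]) auto
  moreover have pos: "0 < f (s + d)" "0 < f r" "0 < f (r + d)" "0 < f s"
    using type_density_pos[OF td] assms by auto
  ultimately have "ln (f (s + d) * f r) \<le> ln (f (r + d) * f s)" by (simp add: ln_mult)
  then show ?thesis using pos by (simp add: ln_le_cancel_iff)
qed

lemma integral_type_density_pos:
  assumes td: "type_density f" and "0 \<le> a" "a < b" "b \<le> 1"
  shows "0 < integral {a..b} f"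
proof -
  define m where "m = min (f a) (f b)"
  have m: "0 < m" using type_density_pos[OF td] assms by (auto simp: m_def)
  have "(b - a) * m = integral {a..b} (\<lambda>_. m)" using assms by simp
  also have "\<dots> \<le> integral {a..b} f"
    using type_density_integrable[OF td, of a b] type_density_ge_min[OF td, of a _ b] assms
    by (intro integral_le) (auto simp: m_def)
  finally show ?thesis using m assms by (smt (verit) mult_pos_pos)
qed

lemma integral_type_density_nonneg:
  assumes td: "type_density f" and "0 \<le> a" "b \<le> 1"
  shows "0 \<le> integral {a..b} f"
  using type_density_integrable[OF td assms(2,3)] type_density_pos[OF td] assms
  by (intro integral_nonneg) (auto intro: less_imp_le)

section \<open>Distribution function and truncated means\<close>

lemma Fc_eq_integral: "x \<in> {0..1} \<Longrightarrow> Fc f x = integral {0..x} f"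
  unfolding Fc_def by (rule arg_cong[where f = "\<lambda>A. integral A f"]) auto

lemma cexp_le_eq:
  "x \<in> {0..1} \<Longrightarrow> cexp_le f x = integral {0..x} (\<lambda>t. t * f t) / integral {0..x} f"
  unfolding cexp_le_def Fc_def
  by (subgoal_tac "{0..1} \<inter> {..x} = {0..x}") auto

lemma Fc_diff:
  assumes td: "type_density f" and "0 \<le> a" "a \<le> b" "b \<le> 1"
  shows "Fc f b - Fc f a = integral {a..b} f"
  using Henstock_Kurzweil_Integration.integral_combine[where a = 0 and c = a and b = b and f = f] type_density_integrable[OF td, of 0 b] assms
  by (simp add: Fc_eq_integral)

lemma Fc_strict_mono:
  assumes td: "type_density f" and "0 \<le> a" "a < b" "b \<le> 1"
  shows "Fc f a < Fc f b"
  using Fc_diff[OF td, of a b] integral_type_density_pos[OF td, of a b] assms by simp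

lemma Fc_Finv:
  assumes td: "type_density f" and "0 \<le> v" "v \<le> 1"
  shows "Finv f v \<in> {0..1}" "Fc f (Finv f v) = v"
proof -
  have "continuous_on {0..1} (\<lambda>x. integral {0..x} f)"
    by (rule indefinite_integral_continuous_1) (rule type_density_integrable[OF td]; simp)
  then have cont: "continuous_on {0..1} (Fc f)"
    by (rule continuous_on_eq) (simp add: Fc_eq_integral)
  have "Fc f 0 = 0" "Fc f 1 = 1"
    using td by (simp_all add: Fc_eq_integral type_density_def)
  then obtain x where x: "x \<in> {0..1}" "Fc f x = v"
    using IVT'[of "Fc f" 0 v 1, OF _ _ _ cont] assms by auto
  have "y = x" if "y \<in> {0..1}" "Fc f y = v" for y
    using Fc_strict_mono[OF td, of x y] Fc_strict_mono[OF td, of y x] x that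
    by (cases x y rule: linorder_cases) auto
  then have "\<exists>!x. x \<in> {0..1} \<and> Fc f x = v" using x by blast
  then have "Finv f v \<in> {0..1} \<and> Fc f (Finv f v) = v"
    unfolding Finv_def by (rule theI')
  then show "Finv f v \<in> {0..1}" "Fc f (Finv f v) = v" by auto
qed

lemma mean_le_of_single_crossing:
  fixes a b :: "real \<Rightarrow> real"
  assumes "(a has_integral 1) A" "(b has_integral 1) A"
    and "((\<lambda>t. t * a t) has_integral Ma) A" "((\<lambda>t. t * b t) has_integral Mb) A"
    and crossing: "\<And>t. t \<in> A \<Longrightarrow> 0 \<le> (t - t0) * (b t - a t)"
  shows "Ma \<le> Mb"
proof -
  have "((\<lambda>t. (t * b t - t * a t) - (t0 * b t - t0 * a t)) has_integral
          (Mb - Ma) - (t0 * 1 - t0 * 1)) A"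
    using assms by (intro has_integral_diff has_integral_mult_right)
  then have "((\<lambda>t. (t - t0) * (b t - a t)) has_integral Mb - Ma) A"
    by (simp add: algebra_simps)
  then show ?thesis using crossing by (force dest: has_integral_nonneg)
qed

lemma single_crossing_point:
  fixes a b :: "real \<Rightarrow> real"
  assumes below: "\<And>s t. s \<in> {l..u} \<Longrightarrow> t \<in> {l..u} \<Longrightarrow> t \<le> s \<Longrightarrow> b s < a s \<Longrightarrow> b t < a t"
  shows "\<exists>t0. \<forall>t\<in>{l..u}. 0 \<le> (t - t0) * (b t - a t)"
proof -
  define D where "D = {t \<in> {l..u}. b t < a t}"
  show ?thesis
  proof (cases "D = {}")
    case True
    then show ?thesis by (intro exI[of _ l]) (auto simp: D_def)
  next
    case False
    have bdd: "bdd_above D" by (rule bdd_aboveI[of _ u]) (auto simp: D_def)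
    have "0 \<le> (t - Sup D) * (b t - a t)" if t: "t \<in> {l..u}" for t
    proof (cases "t < Sup D")
      case True
      then obtain s where "s \<in> D" "t < s" using less_cSup_iff[OF False bdd] by auto
      then have "b t < a t" using below[of s t] t by (auto simp: D_def)
      then show ?thesis using True by (intro mult_nonpos_nonpos) auto
    next
      case False
      then have "t \<notin> D \<or> t = Sup D" using cSup_upper[OF _ bdd] by force
      then show ?thesis
      proof
        assume "t \<notin> D"
        then show ?thesis using False t by (auto simp: D_def intro!: mult_nonneg_nonneg)
      qed simp
    qed
    then show ?thesis by blast
  qed
qed

lemma cexp_le_slope_le_1:
  assumes td: "type_density f" and "0 < x" "x < y" "y \<le> 1"
  shows "cexp_le f y - (y - x) \<le> cexp_le f x"
proof -
  define A where "A = integral {0..y} f"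
  define B where "B = integral {0..x} f"
  define d where "d = y - x"
  have pos: "0 < A" "0 < B" "0 < d"
    using integral_type_density_pos[OF td, of 0 y] integral_type_density_pos[OF td, of 0 x] assms
    by (auto simp: A_def B_def d_def)
  have f_int: "(f has_integral A) {0..y}" "(f has_integral B) {0..x}"
    using type_density_integrable[OF td, of 0 y] type_density_integrable[OF td, of 0 x] assms
    by (auto simp: A_def B_def)
  have tf_int: "((\<lambda>t. t * f t) has_integral A * cexp_le f y) {0..y}"
    "((\<lambda>t. t * f t) has_integral B * cexp_le f x) {0..x}"
    using type_density_integrable_mult_id[OF td, of 0 y] type_density_integrable_mult_id[OF td, of 0 x]
      pos assms by (auto simp: A_def B_def cexp_le_eq)
  \<comment> \<open>The law of \<open>\<theta> | \<theta> \<le> x\<close> shifted by \<open>d\<close> crosses that of \<open>\<theta> | \<theta> \<le> y\<close> once from below,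
     as log-concavity makes the ratio of the two densities monotone; so it has the larger mean.\<close>
  define a where "a = (\<lambda>t. f t / A)"
  define b where "b = (\<lambda>t. if t \<in> {d..y} then f (t - d) / B else 0)"
  have a_int: "(a has_integral 1) {0..y}" "((\<lambda>t. t * a t) has_integral cexp_le f y) {0..y}"
    using has_integral_divide[OF f_int(1), of A] has_integral_divide[OF tf_int(1), of A] pos
    by (simp_all add: a_def)
  have sub: "{d..y} \<subseteq> {0..y}" using pos by auto
  have "x + d = y" by (simp add: d_def)
  have shift: "((\<lambda>t. f (t - d)) has_integral B) {d..y}"
    "((\<lambda>t. (t - d) * f (t - d)) has_integral B * cexp_le f x) {d..y}"
    using has_integral_shift_real_ivl[OF f_int(2), of "- d"]
      has_integral_shift_real_ivl[OF tf_int(2), of "- d"] \<open>x + d = y\<close> by simp_all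
  have "((\<lambda>t. f (t - d) / B) has_integral 1) {d..y}"
    using has_integral_divide[OF shift(1), of B] pos by simp
  then have b_int1: "(b has_integral 1) {0..y}"
    unfolding b_def by (subst has_integral_restrict[OF sub])
  have "((\<lambda>t. (t - d) * f (t - d) / B + d * (f (t - d) / B)) has_integral
      cexp_le f x + d * 1) {d..y}"
    using has_integral_divide[OF shift(2), of B] pos \<open>((\<lambda>t. f (t - d) / B) has_integral 1) {d..y}\<close>
    by (intro has_integral_add has_integral_mult_right) simp_all
  then have "((\<lambda>t. t * (f (t - d) / B)) has_integral cexp_le f x + d) {d..y}"
    by (simp add: algebra_simps add_divide_distrib[symmetric])
  moreover have "(\<lambda>t. t * b t) = (\<lambda>t. if t \<in> {d..y} then t * (f (t - d) / B) else 0)"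
    by (auto simp: b_def)
  ultimately have b_int2: "((\<lambda>t. t * b t) has_integral cexp_le f x + d) {0..y}"
    by (simp only: has_integral_restrict[OF sub])
  have "b t < a t" if "s \<in> {0..y}" "t \<in> {0..y}" "t \<le> s" "b s < a s" for s t
  proof (cases "d \<le> t")
    case False
    then show ?thesis using type_density_pos[OF td, of t] that pos assms by (simp add: a_def b_def)
  next
    case True
    have "f (s - d) * A < f s * B"
      using that True pos by (simp add: a_def b_def field_simps split: if_splits)
    moreover have "f s * f (t - d) \<le> f t * f (s - d)"
      using type_density_ratio_mono[OF td, of "t - d" "s - d" d] that True assms pos by simp
    moreover have "0 < f t" "0 < f s" using type_density_pos[OF td] that assms by auto
    ultimately have "f (t - d) * A < f t * B"
      using pos by (smt (verit, best) mult_le_cancel_left_pos mult_less_cancel_left_pos mult.assoc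
          mult.commute)
    then show ?thesis using that True pos by (simp add: a_def b_def field_simps)
  qed
  then obtain t0 where "\<forall>t\<in>{0..y}. 0 \<le> (t - t0) * (b t - a t)"
    using single_crossing_point[of 0 y b a] by blast
  then have "cexp_le f y \<le> cexp_le f x + d"
    using mean_le_of_single_crossing[OF a_int(1) b_int1 a_int(2) b_int2] by blast
  then show ?thesis by (simp add: d_def)
qed

lemma has_integral_pooled_density:
  assumes td: "type_density f" and hl: "0 \<le> h" "h \<le> l" "l \<le> u" "u \<le> 1"
    and low: "((\<lambda>t. f t * v t) has_integral M) {0..h}"
      "((\<lambda>t. t * f t * v t) has_integral MT) {0..h}"
    and W: "\<And>t. t \<in> {0..1} \<Longrightarrow>
      W t = (if t \<le> h then f t * v t else if l < t \<and> t \<le> u then f t else 0)"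
  shows "(W has_integral M + integral {l..u} f) {0..1}"
    and "((\<lambda>t. t * W t) has_integral MT + integral {l..u} (\<lambda>t. t * f t)) {0..1}"
proof -
  have sub: "{0..h} \<subseteq> {0..1}" "{l..u} \<subseteq> {0..1}" using hl by auto
  have i1: "((\<lambda>t. if t \<in> {0..h} then f t * v t else 0) has_integral M) {0..1}"
    "((\<lambda>t. if t \<in> {0..h} then t * f t * v t else 0) has_integral MT) {0..1}"
    using low sub by (subst has_integral_restrict; simp)+
  have i2: "((\<lambda>t. if t \<in> {l..u} then f t else 0) has_integral integral {l..u} f) {0..1}"
    "((\<lambda>t. if t \<in> {l..u} then t * f t else 0) has_integral integral {l..u} (\<lambda>t. t * f t)) {0..1}"
    using type_density_integrable[OF td, of l u] type_density_integrable_mult_id[OF td, of l u] hl sub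
    by (subst has_integral_restrict; simp add: integrable_integral)+
  have eq: "(if t \<in> {0..h} then f t * v t else 0) + (if t \<in> {l..u} then f t else 0) = W t"
    "(if t \<in> {0..h} then t * f t * v t else 0) + (if t \<in> {l..u} then t * f t else 0) = t * W t"
    if "t \<in> {0..1} - {l}" for t
    using that hl W[of t] by auto
  show "(W has_integral M + integral {l..u} f) {0..1}"
    using has_integral_add[OF i1(1) i2(1)] has_integral_spike_finite_eq[of "{l}" "{0..1}", OF _ eq(1)]
    by auto
  show "((\<lambda>t. t * W t) has_integral MT + integral {l..u} (\<lambda>t. t * f t)) {0..1}"
    using has_integral_add[OF i1(2) i2(2)] has_integral_spike_finite_eq[of "{l}" "{0..1}", OF _ eq(2)]
    by auto
qed

lemma has_integral_truncated_density:
  assumes td: "type_density f"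
    and W: "\<And>t. t \<in> {0..1} \<Longrightarrow> W t = (if t < c then f t else 0)"
  shows "(W has_integral integral {0..min c 1} f) {0..1}"
    and "((\<lambda>t. t * W t) has_integral integral {0..min c 1} (\<lambda>t. t * f t)) {0..1}"
proof -
  have sub: "{0..min c 1} \<subseteq> {0..1}" by auto
  have i: "((\<lambda>t. if t \<in> {0..min c 1} then f t else 0) has_integral integral {0..min c 1} f) {0..1}"
    "((\<lambda>t. if t \<in> {0..min c 1} then t * f t else 0) has_integral
        integral {0..min c 1} (\<lambda>t. t * f t)) {0..1}"
    using type_density_integrable[OF td, of 0 "min c 1"]
      type_density_integrable_mult_id[OF td, of 0 "min c 1"] sub
    by (subst has_integral_restrict; simp add: integrable_integral)+
  have eq: "(if t \<in> {0..min c 1} then f t else 0) = W t"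
    "(if t \<in> {0..min c 1} then t * f t else 0) = t * W t"
    if "t \<in> {0..1} - {min c 1}" for t
    using that W[of t] by auto
  show "(W has_integral integral {0..min c 1} f) {0..1}"
    using i(1) has_integral_spike_finite_eq[of "{min c 1}" "{0..1}", OF _ eq(1)] by auto
  show "((\<lambda>t. t * W t) has_integral integral {0..min c 1} (\<lambda>t. t * f t)) {0..1}"
    using i(2) has_integral_spike_finite_eq[of "{min c 1}" "{0..1}", OF _ eq(2)] by auto
qed

section \<open>The candidate equilibrium\<close>

locale bailout_candidate =
  fixes f :: "real \<Rightarrow> real" and I S \<theta>0 pg \<mu>g \<theta>bg \<theta>bm \<theta>h :: real
  assumes dens: "type_density f"
    and \<theta>0: "0 < \<theta>0" "\<theta>0 < pg + S" "\<theta>0 - S = cexp_le f \<theta>0"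
    and pg_S: "pg + S < 1"
    and \<mu>g: "0 < \<mu>g" "\<mu>g < 1"
    and prices: "\<theta>bg < \<theta>bm" "\<theta>bm < pg"
    and \<theta>h_pos: "0 < \<theta>h"
    and indiff_recipient: "pg + \<theta>bg = 2 * \<theta>bm"
    and indiff_cutoff: "2 * \<theta>bm + 2 * S = \<theta>h + pg + S"
    and \<theta>bg_ge_I: "I \<le> \<theta>bg"
    and pooled_mean: "\<mu>g * \<theta>bg + (1 - \<mu>g) * \<theta>bm = cexp_le f \<theta>h"
    and gov_pool_feasible: "cexp_le f (Finv f (\<mu>g * Fc f \<theta>h)) \<le> \<theta>bg"
    and no_deviation_recipients: "\<forall>p'\<in>{\<theta>bg<..pg}.
       (\<mu>g * Fc f \<theta>h * \<theta>bg + integral {\<theta>h..p' + S} (\<lambda>t. t * f t)) /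
       (\<mu>g * Fc f \<theta>h + Fc f (p' + S) - Fc f \<theta>h) - p' < 0"
    and no_deviation_nonrecipients: "\<forall>p'\<in>{pg<..1 - S}.
       ((1 - \<mu>g) * Fc f \<theta>h * \<theta>bm + integral {pg + S..p' + S} (\<lambda>t. t * f t)) /
       ((1 - \<mu>g) * Fc f \<theta>h + Fc f (p' + S) - Fc f (pg + S)) - p' < 0"
begin

lemma \<theta>h_eq: "\<theta>h = \<theta>bg + S"
  using indiff_recipient indiff_cutoff by linarith

lemma \<theta>h_lt: "\<theta>h < pg + S" "\<theta>h < 1"
  using \<theta>h_eq prices pg_S by linarith+

lemma \<theta>bm_ge_I: "I \<le> \<theta>bm" and pg_ge_I: "I \<le> pg"
  using \<theta>bg_ge_I prices by linarith+

definition "Fh = Fc f \<theta>h"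
definition "Th = integral {0..\<theta>h} (\<lambda>t. t * f t)"

lemma Fh_eq: "Fh = integral {0..\<theta>h} f"
  using \<theta>h_pos \<theta>h_lt by (simp add: Fh_def Fc_eq_integral)

lemma Fh_pos: "0 < Fh" and Fh_le_1: "Fh \<le> 1"
proof -
  show "0 < Fh" using integral_type_density_pos[OF dens, of 0 \<theta>h] \<theta>h_pos \<theta>h_lt Fh_eq by simp
  have "Fc f 1 = 1" using dens by (simp add: Fc_eq_integral type_density_def)
  then show "Fh \<le> 1" using Fc_strict_mono[OF dens, of \<theta>h 1] \<theta>h_pos \<theta>h_lt by (simp add: Fh_def)
qed

lemma Fh_Th_has_integral: "(f has_integral Fh) {0..\<theta>h}" "((\<lambda>t. t * f t) has_integral Th) {0..\<theta>h}"
  using type_density_integrable[OF dens, of 0 \<theta>h] type_density_integrable_mult_id[OF dens, of 0 \<theta>h]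
    \<theta>h_pos \<theta>h_lt by (simp_all add: Fh_eq Th_def integrable_integral)

lemma Th_eq: "Th = Fh * (\<mu>g * \<theta>bg + (1 - \<mu>g) * \<theta>bm)"
  using pooled_mean cexp_le_eq[of \<theta>h f] \<theta>h_pos \<theta>h_lt Fh_eq Fh_pos by (simp add: Th_def)

text \<open>The government pool mixes the bottom \<open>\<mu>g\<close>-quantile of \<open>[0, \<theta>h]\<close> (mean at most \<open>\<theta>bg\<close>
  by \<open>gov_pool_feasible\<close>) with a uniform fraction \<open>\<mu>g\<close> of \<open>[0, \<theta>h]\<close> (mean above \<open>\<theta>bg\<close>); the
  weight \<open>mix\<close> makes the mean of the mixture exactly \<open>\<theta>bg\<close>.\<close>

definition "xq = Finv f (\<mu>g * Fh)"
definition "Tq = integral {0..xq} (\<lambda>t. t * f t)"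
definition "mix = (\<mu>g * Th - \<mu>g * Fh * \<theta>bg) / (\<mu>g * Th - Tq)"
definition "gov_share t = mix * (if t \<le> xq then 1 else 0) + (1 - mix) * \<mu>g"

lemma xq: "0 < xq" "xq < \<theta>h" "integral {0..xq} f = \<mu>g * Fh"
proof -
  have "0 \<le> \<mu>g * Fh" "\<mu>g * Fh \<le> 1" using \<mu>g Fh_pos Fh_le_1 by (auto intro: mult_le_one)
  then have xq01: "xq \<in> {0..1}" and Fxq: "Fc f xq = \<mu>g * Fh"
    using Fc_Finv[OF dens] by (auto simp: xq_def)
  then show "integral {0..xq} f = \<mu>g * Fh" by (simp add: Fc_eq_integral)
  have "Fc f 0 = 0" by (simp add: Fc_eq_integral)
  then show "0 < xq" using xq01 Fxq \<mu>g Fh_pos by (cases "xq = 0") auto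
  show "xq < \<theta>h"
  proof (rule ccontr)
    assume "\<not> xq < \<theta>h"
    then have "Fh \<le> Fc f xq"
      using Fc_strict_mono[OF dens, of \<theta>h xq] xq01 \<theta>h_pos by (cases "xq = \<theta>h") (auto simp: Fh_def)
    then show False using Fxq \<mu>g Fh_pos by simp
  qed
qed

lemma Tq_le: "Tq \<le> \<mu>g * Fh * \<theta>bg"
proof -
  have "Tq / (\<mu>g * Fh) \<le> \<theta>bg"
    using gov_pool_feasible cexp_le_eq[of xq f] xq \<theta>h_lt by (simp add: Tq_def xq_def Fh_def)
  then show ?thesis using \<mu>g Fh_pos by (simp add: field_simps)
qed

lemma mix: "0 \<le> mix" "mix \<le> 1" "mix * (\<mu>g * Th - Tq) = \<mu>g * Th - \<mu>g * Fh * \<theta>bg"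
proof -
  have "\<mu>g * Th - \<mu>g * Fh * \<theta>bg = \<mu>g * Fh * (1 - \<mu>g) * (\<theta>bm - \<theta>bg)"
    by (simp add: Th_eq algebra_simps)
  then have "0 < \<mu>g * Th - \<mu>g * Fh * \<theta>bg" using \<mu>g Fh_pos prices by simp
  then show "0 \<le> mix" "mix \<le> 1" "mix * (\<mu>g * Th - Tq) = \<mu>g * Th - \<mu>g * Fh * \<theta>bg"
    using Tq_le by (simp_all add: mix_def)
qed

lemma gov_share_bounds: "0 \<le> gov_share t" "gov_share t \<le> 1"
proof -
  have "0 \<le> (1 - mix) * \<mu>g" "(1 - mix) * \<mu>g \<le> 1 - mix" using mix \<mu>g by (auto intro: mult_left_le)
  then show "0 \<le> gov_share t" "gov_share t \<le> 1" using mix by (auto simp: gov_share_def)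
qed

lemma gov_share_has_integral:
  "((\<lambda>t. f t * gov_share t) has_integral \<mu>g * Fh) {0..\<theta>h}"
  "((\<lambda>t. t * f t * gov_share t) has_integral \<mu>g * Fh * \<theta>bg) {0..\<theta>h}"
proof -
  have sub: "{0..xq} \<subseteq> {0..\<theta>h}" using xq by auto
  have q1: "((\<lambda>t. if t \<in> {0..xq} then f t else 0) has_integral \<mu>g * Fh) {0..\<theta>h}"
    using type_density_integrable[OF dens, of 0 xq] xq \<theta>h_lt
    by (subst has_integral_restrict[OF sub]) (auto dest: integrable_integral)
  have q2: "((\<lambda>t. if t \<in> {0..xq} then t * f t else 0) has_integral Tq) {0..\<theta>h}"
    using type_density_integrable_mult_id[OF dens, of 0 xq] xq \<theta>h_lt
    by (subst has_integral_restrict[OF sub]) (auto simp: Tq_def)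
  have "((\<lambda>t. mix * (if t \<in> {0..xq} then f t else 0) + ((1 - mix) * \<mu>g) * f t) has_integral
          mix * (\<mu>g * Fh) + ((1 - mix) * \<mu>g) * Fh) {0..\<theta>h}"
    by (intro has_integral_add has_integral_mult_right q1 Fh_Th_has_integral(1))
  then have "((\<lambda>t. f t * gov_share t) has_integral mix * (\<mu>g * Fh) + ((1 - mix) * \<mu>g) * Fh) {0..\<theta>h}"
    by (rule has_integral_eq[rotated]) (auto simp: gov_share_def algebra_simps)
  then show "((\<lambda>t. f t * gov_share t) has_integral \<mu>g * Fh) {0..\<theta>h}"
    by (simp add: algebra_simps)
  have "((\<lambda>t. mix * (if t \<in> {0..xq} then t * f t else 0) + ((1 - mix) * \<mu>g) * (t * f t)) has_integral
          mix * Tq + ((1 - mix) * \<mu>g) * Th) {0..\<theta>h}"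
    by (intro has_integral_add has_integral_mult_right q2 Fh_Th_has_integral(2))
  then have "((\<lambda>t. t * f t * gov_share t) has_integral mix * Tq + ((1 - mix) * \<mu>g) * Th) {0..\<theta>h}"
    by (rule has_integral_eq[rotated]) (auto simp: gov_share_def algebra_simps)
  moreover have "mix * Tq + ((1 - mix) * \<mu>g) * Th = \<mu>g * Fh * \<theta>bg"
    using mix(3) by (simp add: algebra_simps)
  ultimately show "((\<lambda>t. t * f t * gov_share t) has_integral \<mu>g * Fh * \<theta>bg) {0..\<theta>h}"
    by simp
qed

lemma market_share_has_integral:
  "((\<lambda>t. f t * (1 - gov_share t)) has_integral (1 - \<mu>g) * Fh) {0..\<theta>h}"
  "((\<lambda>t. t * f t * (1 - gov_share t)) has_integral (1 - \<mu>g) * Fh * \<theta>bm) {0..\<theta>h}"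
proof -
  show "((\<lambda>t. f t * (1 - gov_share t)) has_integral (1 - \<mu>g) * Fh) {0..\<theta>h}"
    using has_integral_diff[OF Fh_Th_has_integral(1) gov_share_has_integral(1)] by (simp add: algebra_simps)
  show "((\<lambda>t. t * f t * (1 - gov_share t)) has_integral (1 - \<mu>g) * Fh * \<theta>bm) {0..\<theta>h}"
    using has_integral_diff[OF Fh_Th_has_integral(2) gov_share_has_integral(2)] by (simp add: Th_eq algebra_simps)
qed

definition "payoff t p a = pay1 I S pg \<theta>bg \<theta>bm t p a"
definition "prefers_market p t \<longleftrightarrow> payoff t p Gov < payoff t p Mkt \<and> payoff t p NoSale < payoff t p Mkt"
definition "prefers_gov p t \<longleftrightarrow> \<not> prefers_market p t \<and> payoff t p NoSale \<le> payoff t p Gov"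

text \<open>On the equilibrium path the types below \<open>\<theta>h\<close>, indifferent between the government and the
  market, split according to \<open>gov_share\<close>; everywhere else firms play a pure best response.\<close>

definition "\<sigma>1 t p a =
  (if p = \<theta>bm \<and> t \<le> \<theta>h then (case a of Gov \<Rightarrow> gov_share t | Mkt \<Rightarrow> 1 - gov_share t | NoSale \<Rightarrow> 0)
   else (case a of Gov \<Rightarrow> (if prefers_gov p t then 1 else 0)
     | Mkt \<Rightarrow> (if prefers_market p t then 1 else 0)
     | NoSale \<Rightarrow> (if \<not> prefers_market p t \<and> \<not> prefers_gov p t then 1 else 0)))"

definition "\<sigma>2 t (h :: act) q = (if t \<le> sale_pay I S q then 1 else (0 :: real))"

text \<open>The highest type selling to the market at a \<open>t = 1\<close> offer \<open>q > \<theta>bm\<close>: its alternative is the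
  bailout followed by a sale at \<open>\<theta>bg\<close> when \<open>q \<le> pg\<close>, and keeping the asset otherwise.\<close>

definition "market_cutoff q = (if q \<le> pg then \<theta>h + q - \<theta>bm else q + S)"

lemma payoff_Gov: "payoff t p Gov = pg + S + max (\<theta>bg + S) t"
  and payoff_Mkt: "I \<le> q \<Longrightarrow> payoff t q Mkt = q + S + max (\<theta>bm + S) t"
  and payoff_NoSale: "payoff t p NoSale = t + max (\<theta>bm + S) t"
  using pg_ge_I \<theta>bg_ge_I \<theta>bm_ge_I by (simp_all add: payoff_def pay1_def sale_pay_def)

lemma payoffs_pooling:
  assumes "t \<le> \<theta>h"
  shows "payoff t \<theta>bm Gov = 2 * \<theta>bm + 2 * S" "payoff t \<theta>bm Mkt = 2 * \<theta>bm + 2 * S"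
    "payoff t \<theta>bm NoSale < 2 * \<theta>bm + 2 * S"
  using assms \<theta>h_eq prices indiff_recipient
  by (simp_all add: payoff_Gov payoff_Mkt[OF \<theta>bm_ge_I] payoff_NoSale)

lemma prefers_gov_middle:
  assumes "\<theta>h < t" "t \<le> pg + S"
  shows "prefers_gov \<theta>bm t" "\<not> prefers_market \<theta>bm t"
  using assms \<theta>h_eq prices indiff_recipient
  by (auto simp: prefers_gov_def prefers_market_def payoff_Gov payoff_Mkt[OF \<theta>bm_ge_I] payoff_NoSale)

lemma prefers_no_sale_high:
  assumes "pg + S < t"
  shows "\<not> prefers_gov \<theta>bm t" "\<not> prefers_market \<theta>bm t"
  using assms \<theta>h_eq prices
  by (auto simp: prefers_gov_def prefers_market_def payoff_Gov payoff_Mkt[OF \<theta>bm_ge_I] payoff_NoSale)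

lemma prefers_market_iff:
  assumes "\<theta>bm < q"
  shows "prefers_market q t \<longleftrightarrow> t < market_cutoff q"
proof -
  have "I \<le> q" using assms \<theta>bm_ge_I by linarith
  then have "prefers_market q t \<longleftrightarrow>
      pg + S + max \<theta>h t < q + S + max (\<theta>bm + S) t \<and> t < q + S"
    using \<theta>h_eq by (auto simp: prefers_market_def payoff_Gov payoff_Mkt payoff_NoSale max_def)
  also have "\<dots> \<longleftrightarrow> t < market_cutoff q"
    unfolding market_cutoff_def using assms \<theta>h_eq prices indiff_recipient
    by (cases "q \<le> pg") (auto simp: max_def)
  finally show ?thesis .
qed

lemma \<sigma>1_distribution: "0 \<le> \<sigma>1 t p a" "\<sigma>1 t p Gov + \<sigma>1 t p Mkt + \<sigma>1 t p NoSale = 1"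
  using gov_share_bounds by (cases a; auto simp: \<sigma>1_def prefers_gov_def)+

lemma \<sigma>1_optimal:
  assumes "0 < \<sigma>1 t p a"
  shows "payoff t p b \<le> payoff t p a"
proof (cases "p = \<theta>bm \<and> t \<le> \<theta>h")
  case True
  then have "a \<noteq> NoSale" using assms by (auto simp: \<sigma>1_def)
  with True show ?thesis using payoffs_pooling[of t] by (cases a; cases b) auto
next
  case False
  then show ?thesis using assms
    by (cases a; cases b) (auto simp: \<sigma>1_def prefers_gov_def prefers_market_def split: if_splits)
qed

lemma payoff_measurable [measurable]: "(\<lambda>t. payoff t p a) \<in> borel_measurable borel"
  unfolding payoff_def pay1_def by (cases a) simp_all

lemma gov_share_measurable [measurable]: "gov_share \<in> borel_measurable borel"
  unfolding gov_share_def by measurable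

lemma \<sigma>1_measurable: "(\<lambda>t. \<sigma>1 t p a) \<in> borel_measurable borel"
proof -
  have "(\<lambda>t. if p = \<theta>bm \<and> t \<le> \<theta>h then gov_share t else if prefers_gov p t then 1 else 0 :: real)
      \<in> borel_measurable borel"
    "(\<lambda>t. if p = \<theta>bm \<and> t \<le> \<theta>h then 1 - gov_share t else if prefers_market p t then 1 else 0 :: real)
      \<in> borel_measurable borel"
    "(\<lambda>t. if p = \<theta>bm \<and> t \<le> \<theta>h then 0
        else if \<not> prefers_market p t \<and> \<not> prefers_gov p t then 1 else 0 :: real) \<in> borel_measurable borel"
    unfolding prefers_gov_def prefers_market_def by measurable
  then show ?thesis unfolding \<sigma>1_def by (cases a) (simp_all only: act.case)
qed

lemma \<sigma>2_measurable: "(\<lambda>t. \<sigma>2 t h q) \<in> borel_measurable borel"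
  unfolding \<sigma>2_def by measurable

lemma \<sigma>2_eq: "I \<le> q \<Longrightarrow> \<sigma>2 t h q = (if t \<le> q + S then 1 else 0)"
  by (simp add: \<sigma>2_def sale_pay_def)

lemma \<sigma>1_on_path:
  "\<sigma>1 t \<theta>bm Gov = (if t \<le> \<theta>h then gov_share t else if t \<le> pg + S then 1 else 0)"
  "\<sigma>1 t \<theta>bm Mkt = (if t \<le> \<theta>h then 1 - gov_share t else 0)"
  "\<sigma>1 t \<theta>bm NoSale = (if t \<le> pg + S then 0 else 1)"
  using prefers_gov_middle[of t] prefers_no_sale_high[of t] \<theta>h_lt
  by (cases "t \<le> \<theta>h"; cases "t \<le> pg + S"; auto simp: \<sigma>1_def)+

lemma \<sigma>1_deviation: "q \<noteq> \<theta>bm \<Longrightarrow> \<sigma>1 t q Mkt = (if prefers_market q t then 1 else 0)"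
  by (simp add: \<sigma>1_def)

lemma cexp_le_market_cutoff:
  assumes q: "\<theta>bm < q"
  shows "cexp_le f (min (market_cutoff q) 1) \<le> q"
proof -
  define c where "c = min (market_cutoff q) 1"
  have "c \<le> 1" by (simp add: c_def)
  show ?thesis
  proof (cases "q \<le> pg")
    case True
    have "c \<le> \<theta>h + q - \<theta>bm" "\<theta>h < c"
      using True q \<theta>h_lt by (auto simp: c_def market_cutoff_def)
    then have "cexp_le f c - (c - \<theta>h) \<le> cexp_le f \<theta>h"
      using \<theta>h_pos \<open>c \<le> 1\<close> by (intro cexp_le_slope_le_1[OF dens])
    moreover have "cexp_le f \<theta>h = \<theta>bm - \<mu>g * (\<theta>bm - \<theta>bg)"
      using pooled_mean by (simp add: algebra_simps)
    moreover have "0 < \<mu>g * (\<theta>bm - \<theta>bg)" using \<mu>g prices by simp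
    ultimately show ?thesis using \<open>c \<le> \<theta>h + q - \<theta>bm\<close> by (simp add: c_def)
  next
    case False
    have "c \<le> q + S" "\<theta>0 < c"
      using False \<theta>0 pg_S by (auto simp: c_def market_cutoff_def)
    then have "cexp_le f c - (c - \<theta>0) \<le> cexp_le f \<theta>0"
      using \<theta>0 \<open>c \<le> 1\<close> by (intro cexp_le_slope_le_1[OF dens])
    then show ?thesis using \<open>c \<le> q + S\<close> \<theta>0(3) by (simp add: c_def)
  qed
qed

lemma competitive_t1_market: "competitive_price (\<lambda>q t. f t * \<sigma>1 t q Mkt) \<theta>bm"
  unfolding competitive_price_def
proof (intro conjI impI allI)
  have "f t * \<sigma>1 t \<theta>bm Mkt =
      (if t \<le> \<theta>h then f t * (1 - gov_share t) else if \<theta>h < t \<and> t \<le> \<theta>h then f t else 0)" for t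
    by (simp add: \<sigma>1_on_path)
  note pool = has_integral_pooled_density[OF dens _ order.refl order.refl _
      market_share_has_integral, of "\<lambda>t. f t * \<sigma>1 t \<theta>bm Mkt", OF _ _ this]
  show "integral {0..1} (\<lambda>t. t * (f t * \<sigma>1 t \<theta>bm Mkt)) =
      \<theta>bm * integral {0..1} (\<lambda>t. f t * \<sigma>1 t \<theta>bm Mkt)"
    using integral_unique[OF pool(1)] integral_unique[OF pool(2)] \<theta>h_pos \<theta>h_lt by simp
next
  fix q assume q: "\<theta>bm < q"
  define c where "c = min (market_cutoff q) 1"
  have c: "\<theta>h < c" "c \<le> 1" using q \<theta>h_lt prices by (auto simp: c_def market_cutoff_def)
  have "f t * \<sigma>1 t q Mkt = (if t < market_cutoff q then f t else 0)" for t
    using \<sigma>1_deviation[of q t] prefers_market_iff[OF q, of t] q by auto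
  note trunc = has_integral_truncated_density[OF dens this]
  have "integral {0..c} (\<lambda>t. t * f t) \<le> q * integral {0..c} f"
    using cexp_le_market_cutoff[OF q] cexp_le_eq[of c f] c \<theta>h_pos
      integral_type_density_pos[OF dens, of 0 c] by (simp add: c_def divide_le_eq)
  then show "integral {0..1} (\<lambda>t. t * (f t * \<sigma>1 t q Mkt)) -
      q * integral {0..1} (\<lambda>t. f t * \<sigma>1 t q Mkt) \<le> 0"
    using integral_unique[OF trunc(1)] integral_unique[OF trunc(2)] by (simp add: c_def)
qed

lemma recipient_t2_integrals:
  assumes q: "\<theta>bg \<le> q"
  defines "e \<equiv> min (q + S) (pg + S)"
  shows "integral {0..1} (\<lambda>t. f t * \<sigma>1 t \<theta>bm Gov * \<sigma>2 t Gov q) = \<mu>g * Fh + integral {\<theta>h..e} f"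
    and "integral {0..1} (\<lambda>t. t * (f t * \<sigma>1 t \<theta>bm Gov * \<sigma>2 t Gov q)) =
      \<mu>g * Fh * \<theta>bg + integral {\<theta>h..e} (\<lambda>t. t * f t)"
proof -
  have e: "\<theta>h \<le> e" "e \<le> 1" using q \<theta>h_eq \<theta>h_lt pg_S by (auto simp: e_def)
  have "I \<le> q" "\<theta>h \<le> q + S" using q \<theta>bg_ge_I \<theta>h_eq by linarith+
  then have "f t * \<sigma>1 t \<theta>bm Gov * \<sigma>2 t Gov q =
      (if t \<le> \<theta>h then f t * gov_share t else if \<theta>h < t \<and> t \<le> e then f t else 0)" for t
    using \<theta>h_lt by (auto simp: \<sigma>1_on_path \<sigma>2_eq e_def)
  note pool = has_integral_pooled_density[OF dens _ order.refl e gov_share_has_integral, OF _ this]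
  show "integral {0..1} (\<lambda>t. f t * \<sigma>1 t \<theta>bm Gov * \<sigma>2 t Gov q) = \<mu>g * Fh + integral {\<theta>h..e} f"
    and "integral {0..1} (\<lambda>t. t * (f t * \<sigma>1 t \<theta>bm Gov * \<sigma>2 t Gov q)) =
      \<mu>g * Fh * \<theta>bg + integral {\<theta>h..e} (\<lambda>t. t * f t)"
    using integral_unique[OF pool(1)] integral_unique[OF pool(2)] \<theta>h_pos by simp_all
qed

lemma competitive_t2_recipients:
  "competitive_price (\<lambda>q t. f t * \<sigma>1 t \<theta>bm Gov * \<sigma>2 t Gov q) \<theta>bg"
  unfolding competitive_price_def
proof (intro conjI impI allI)
  show "integral {0..1} (\<lambda>t. t * (f t * \<sigma>1 t \<theta>bm Gov * \<sigma>2 t Gov \<theta>bg)) =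
      \<theta>bg * integral {0..1} (\<lambda>t. f t * \<sigma>1 t \<theta>bm Gov * \<sigma>2 t Gov \<theta>bg)"
    using recipient_t2_integrals[of \<theta>bg] \<theta>h_eq \<theta>h_lt by (simp add: algebra_simps)
next
  fix q assume q: "\<theta>bg < q"
  \<comment> \<open>Above \<open>pg\<close> the pool of recipients no longer grows, so the offer \<open>pg\<close> is the relevant test.\<close>
  define p' where "p' = min q pg"
  have p': "p' \<in> {\<theta>bg<..pg}" using q prices by (auto simp: p'_def)
  have e: "min (q + S) (pg + S) = p' + S" by (simp add: p'_def)
  have "\<theta>h \<le> p' + S" "p' + S \<le> 1" using p' \<theta>h_eq pg_S by auto
  then have D: "\<mu>g * Fc f \<theta>h + Fc f (p' + S) - Fc f \<theta>h = \<mu>g * Fh + integral {\<theta>h..p' + S} f"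
    using Fc_diff[OF dens, of \<theta>h "p' + S"] \<theta>h_pos by (simp add: Fh_def)
  have "0 < \<mu>g * Fh + integral {\<theta>h..p' + S} f"
    using integral_type_density_nonneg[OF dens, of \<theta>h "p' + S"] \<open>p' + S \<le> 1\<close> \<theta>h_pos \<mu>g Fh_pos
    by (simp add: add_pos_nonneg)
  then have "\<mu>g * Fh * \<theta>bg + integral {\<theta>h..p' + S} (\<lambda>t. t * f t) <
      p' * (\<mu>g * Fh + integral {\<theta>h..p' + S} f)"
    using bspec[OF no_deviation_recipients p'] by (simp add: D Fh_def divide_less_eq)
  also have "\<dots> \<le> q * (\<mu>g * Fh + integral {\<theta>h..p' + S} f)"
    using \<open>0 < \<mu>g * Fh + _\<close> by (simp add: p'_def)
  finally show "integral {0..1} (\<lambda>t. t * (f t * \<sigma>1 t \<theta>bm Gov * \<sigma>2 t Gov q)) -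
      q * integral {0..1} (\<lambda>t. f t * \<sigma>1 t \<theta>bm Gov * \<sigma>2 t Gov q) \<le> 0"
    using recipient_t2_integrals[of q] q e by simp
qed

lemma nonrecipient_t2_integrals:
  assumes q: "\<theta>bm \<le> q"
  defines "u \<equiv> max (pg + S) (min (q + S) 1)"
  defines "W \<equiv> \<lambda>t. f t * (\<sigma>1 t \<theta>bm Mkt * \<sigma>2 t Mkt q + \<sigma>1 t \<theta>bm NoSale * \<sigma>2 t NoSale q)"
  shows "integral {0..1} W = (1 - \<mu>g) * Fh + integral {pg + S..u} f"
    and "integral {0..1} (\<lambda>t. t * W t) = (1 - \<mu>g) * Fh * \<theta>bm + integral {pg + S..u} (\<lambda>t. t * f t)"
proof -
  have u: "\<theta>h \<le> pg + S" "pg + S \<le> u" "u \<le> 1" using \<theta>h_lt pg_S by (auto simp: u_def)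
  have "I \<le> q" "\<theta>h \<le> q + S" using q \<theta>bm_ge_I \<theta>h_eq prices by linarith+
  then have "W t = (if t \<le> \<theta>h then f t * (1 - gov_share t) else if pg + S < t \<and> t \<le> u then f t else 0)"
    if "t \<in> {0..1}" for t
    using that \<theta>h_lt by (auto simp: W_def \<sigma>1_on_path \<sigma>2_eq u_def)
  note pool = has_integral_pooled_density[OF dens _ u market_share_has_integral, OF _ this]
  show "integral {0..1} W = (1 - \<mu>g) * Fh + integral {pg + S..u} f"
    and "integral {0..1} (\<lambda>t. t * W t) = (1 - \<mu>g) * Fh * \<theta>bm + integral {pg + S..u} (\<lambda>t. t * f t)"
    using integral_unique[OF pool(1)] integral_unique[OF pool(2)] \<theta>h_pos by simp_all
qed

lemma competitive_t2_nonrecipients: "competitive_price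
    (\<lambda>q t. f t * (\<sigma>1 t \<theta>bm Mkt * \<sigma>2 t Mkt q + \<sigma>1 t \<theta>bm NoSale * \<sigma>2 t NoSale q)) \<theta>bm"
  unfolding competitive_price_def
proof (intro conjI impI allI)
  show "integral {0..1} (\<lambda>t. t * (f t * (\<sigma>1 t \<theta>bm Mkt * \<sigma>2 t Mkt \<theta>bm +
        \<sigma>1 t \<theta>bm NoSale * \<sigma>2 t NoSale \<theta>bm))) =
      \<theta>bm * integral {0..1} (\<lambda>t. f t * (\<sigma>1 t \<theta>bm Mkt * \<sigma>2 t Mkt \<theta>bm +
        \<sigma>1 t \<theta>bm NoSale * \<sigma>2 t NoSale \<theta>bm))"
  proof -
    have "max (pg + S) (min (\<theta>bm + S) 1) = pg + S" using prices by simp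
    then show ?thesis unfolding nonrecipient_t2_integrals[OF order.refl] by simp
  qed
next
  fix q assume q: "\<theta>bm < q"
  define u where "u = max (pg + S) (min (q + S) 1)"
  define D where "D = (1 - \<mu>g) * Fh + integral {pg + S..u} f"
  define N where "N = (1 - \<mu>g) * Fh * \<theta>bm + integral {pg + S..u} (\<lambda>t. t * f t)"
  have "0 \<le> pg + S" "u \<le> 1" using \<theta>h_pos \<theta>h_lt pg_S by (auto simp: u_def)
  then have D_pos: "0 < D"
    using integral_type_density_nonneg[OF dens, of "pg + S" u] \<mu>g Fh_pos
    by (simp add: D_def add_pos_nonneg)
  have "N < q * D"
  proof (cases "q \<le> pg")
    case True
    then have "N - q * D = (1 - \<mu>g) * Fh * (\<theta>bm - q)" by (simp add: N_def D_def u_def algebra_simps)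
    also have "\<dots> < 0" using \<mu>g Fh_pos q by (simp add: mult_pos_neg)
    finally show ?thesis by simp
  next
    case False
    \<comment> \<open>Offers above \<open>1 - S\<close> attract no further types, so \<open>1 - S\<close> is the relevant test.\<close>
    define p' where "p' = min q (1 - S)"
    have p': "p' \<in> {pg<..1 - S}" using False pg_S by (auto simp: p'_def)
    have u_eq: "u = p' + S" using False pg_S by (simp add: u_def p'_def min_def max_def)
    have "Fc f (p' + S) - Fc f (pg + S) = integral {pg + S..u} f"
      using Fc_diff[OF dens, of "pg + S" "p' + S"] u_eq p' \<open>0 \<le> pg + S\<close> by simp
    then have "N < p' * D"
      using bspec[OF no_deviation_nonrecipients p'] D_pos
      by (simp add: N_def D_def Fh_def u_eq divide_less_eq algebra_simps)
    also have "\<dots> \<le> q * D" using D_pos by (simp add: p'_def)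
    finally show ?thesis .
  qed
  then show "integral {0..1} (\<lambda>t. t * (f t * (\<sigma>1 t \<theta>bm Mkt * \<sigma>2 t Mkt q +
        \<sigma>1 t \<theta>bm NoSale * \<sigma>2 t NoSale q))) -
      q * integral {0..1} (\<lambda>t. f t * (\<sigma>1 t \<theta>bm Mkt * \<sigma>2 t Mkt q +
        \<sigma>1 t \<theta>bm NoSale * \<sigma>2 t NoSale q)) \<le> 0"
    using nonrecipient_t2_integrals[of q] q by (simp add: N_def D_def u_def)
qed

lemma transparent_equilibrium: "transparent_equilibrium f I S pg \<sigma>1 \<sigma>2 \<theta>bm \<theta>bg \<theta>bm"
  unfolding transparent_equilibrium_def
  using \<sigma>1_distribution \<sigma>1_measurable \<sigma>2_measurable \<sigma>1_optimal[unfolded payoff_def]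
    competitive_t1_market competitive_t2_recipients competitive_t2_nonrecipients
  by (simp add: \<sigma>2_def)

lemma equilibrium_outcome:
  "(\<forall>t\<in>{0..\<theta>h}. \<sigma>1 t \<theta>bm NoSale = 0 \<and> \<sigma>2 t Gov \<theta>bg = 1 \<and> \<sigma>2 t Mkt \<theta>bm = 1) \<and>
   integral {0..\<theta>h} (\<lambda>t. f t * \<sigma>1 t \<theta>bm Gov) = \<mu>g * Fc f \<theta>h \<and>
   integral {0..\<theta>h} (\<lambda>t. t * f t * \<sigma>1 t \<theta>bm Gov) = \<mu>g * Fc f \<theta>h * \<theta>bg \<and>
   integral {0..\<theta>h} (\<lambda>t. f t * \<sigma>1 t \<theta>bm Mkt) = (1 - \<mu>g) * Fc f \<theta>h \<and>
   integral {0..\<theta>h} (\<lambda>t. t * f t * \<sigma>1 t \<theta>bm Mkt) = (1 - \<mu>g) * Fc f \<theta>h * \<theta>bm \<and>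
   (\<forall>t\<in>{\<theta>h<..pg + S}. \<sigma>1 t \<theta>bm Gov = 1 \<and> \<sigma>2 t Gov \<theta>bg = 0) \<and>
   (\<forall>t\<in>{pg + S<..1}. \<sigma>1 t \<theta>bm NoSale = 1 \<and> \<sigma>2 t NoSale \<theta>bm = 0)"
proof -
  have on_low: "\<sigma>1 t \<theta>bm Gov = gov_share t" "\<sigma>1 t \<theta>bm Mkt = 1 - gov_share t" if "t \<in> {0..\<theta>h}" for t
    using that by (simp_all add: \<sigma>1_on_path)
  have "integral {0..\<theta>h} (\<lambda>t. f t * \<sigma>1 t \<theta>bm Gov) = \<mu>g * Fh"
    "integral {0..\<theta>h} (\<lambda>t. t * f t * \<sigma>1 t \<theta>bm Gov) = \<mu>g * Fh * \<theta>bg"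
    "integral {0..\<theta>h} (\<lambda>t. f t * \<sigma>1 t \<theta>bm Mkt) = (1 - \<mu>g) * Fh"
    "integral {0..\<theta>h} (\<lambda>t. t * f t * \<sigma>1 t \<theta>bm Mkt) = (1 - \<mu>g) * Fh * \<theta>bm"
    using gov_share_has_integral market_share_has_integral
    by (auto simp: on_low intro!: integral_unique elim!: has_integral_eq[rotated])
  moreover have "I \<le> \<theta>bg" "I \<le> \<theta>bm" by (fact \<theta>bg_ge_I \<theta>bm_ge_I)+
  ultimately show ?thesis
    using \<theta>h_eq[symmetric] \<theta>h_lt prices by (auto simp: Fh_def \<sigma>1_on_path \<sigma>2_eq)
qed

end

theorem propositionB1:
  fixes f :: "real \<Rightarrow> real"
    and I S \<theta>0 p0 pg \<mu>g \<theta>bg \<theta>bm \<theta>h :: real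
  assumes dens: "type_density f"
    and I_pos: "I > 0" and S_pos: "S > 0"
    and theta0: "0 < \<theta>0" "\<theta>0 < 1" "\<theta>0 - S = cexp_le f \<theta>0"
    and theta0_unique: "\<forall>x\<in>{0<..<1}. x - S = cexp_le f x \<longrightarrow> x = \<theta>0"
    and p0_def: "p0 = cexp_le f \<theta>0" and p0_I: "p0 \<ge> I"
    and pg: "p0 < pg" "pg < 1 - S"
    and mu: "0 < \<mu>g" "\<mu>g < 1"
    and ord: "\<theta>bg < \<theta>bm" "\<theta>bm < pg"
    and th: "0 < \<theta>h" "\<theta>h < min (pg + S) 1"
    and a: "pg + \<theta>bg = 2 * \<theta>bm"
    and b: "2 * \<theta>bm + 2 * S = \<theta>h + pg + S"
    and c: "\<theta>bg \<ge> I"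
    and d: "\<mu>g * \<theta>bg + (1 - \<mu>g) * \<theta>bm = cexp_le f \<theta>h"
    and e: "\<theta>bg \<ge> cexp_le f (Finv f (\<mu>g * Fc f \<theta>h))"
    and f_dev: "\<forall>p'\<in>{\<theta>bg<..pg}.
       (\<mu>g * Fc f \<theta>h * \<theta>bg + integral {\<theta>h..p' + S} (\<lambda>t. t * f t)) /
       (\<mu>g * Fc f \<theta>h + Fc f (p' + S) - Fc f \<theta>h) - p' < 0"
    and g_dev: "\<forall>p'\<in>{pg<..1 - S}.
       ((1 - \<mu>g) * Fc f \<theta>h * \<theta>bm + integral {min (pg + S) 1..p' + S} (\<lambda>t. t * f t)) /
       ((1 - \<mu>g) * Fc f \<theta>h + Fc f (p' + S) - Fc f (min (pg + S) 1)) - p' < 0"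
  shows "\<exists>s1 s2.
     transparent_equilibrium f I S pg s1 s2 \<theta>bm \<theta>bg \<theta>bm \<and>
     \<comment> \<open>types up to \<theta>h sell in both periods\<close>
     (\<forall>t\<in>{0..\<theta>h}. s1 t \<theta>bm NoSale = 0 \<and> s2 t Gov \<theta>bg = 1 \<and> s2 t Mkt \<theta>bm = 1) \<and>
     \<comment> \<open>a fraction \<mu>g of them, with average value \<theta>bg, to the government\<close>
     integral {0..\<theta>h} (\<lambda>t. f t * s1 t \<theta>bm Gov) = \<mu>g * Fc f \<theta>h \<and>
     integral {0..\<theta>h} (\<lambda>t. t * f t * s1 t \<theta>bm Gov) = \<mu>g * Fc f \<theta>h * \<theta>bg \<and>
     \<comment> \<open>the rest, with average value \<theta>bm, to the market\<close>
     integral {0..\<theta>h} (\<lambda>t. f t * s1 t \<theta>bm Mkt) = (1 - \<mu>g) * Fc f \<theta>h \<and>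
     integral {0..\<theta>h} (\<lambda>t. t * f t * s1 t \<theta>bm Mkt) = (1 - \<mu>g) * Fc f \<theta>h * \<theta>bm \<and>
     \<comment> \<open>types in (\<theta>h, \<theta>hg] sell only to the government at t=1\<close>
     (\<forall>t\<in>{\<theta>h<..min (pg + S) 1}. s1 t \<theta>bm Gov = 1 \<and> s2 t Gov \<theta>bg = 0) \<and>
     \<comment> \<open>types above \<theta>hg never sell\<close>
     (\<forall>t\<in>{min (pg + S) 1<..1}. s1 t \<theta>bm NoSale = 1 \<and> s2 t NoSale \<theta>bm = 0)"
proof -
  have min_eq: "min (pg + S) 1 = pg + S" using pg by simp
  interpret bailout_candidate f I S \<theta>0 pg \<mu>g \<theta>bg \<theta>bm \<theta>h
  proof
    show "\<theta>0 < pg + S" using theta0(3) p0_def pg(1) by simp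
  qed (use assms min_eq in auto)
  show ?thesis
    using transparent_equilibrium equilibrium_outcome unfolding min_eq by blast
qed

end
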